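(* Let $G$ be a graph that does not contain $K_{2,3}$ as a minor. Then $G$ contains $K^4$ as a minor if and only if $G$ contains $K^4$ as a subgraph.
   Context: Graphs are simple. *)

theory Defs
  imports Main
begin

definition simple_graph :: "'a set \<Rightarrow> ('a \<Rightarrow> 'a \<Rightarrow> bool) \<Rightarrow> bool" where
  "simple_graph V E \<longleftrightarrow> finite V \<and> (\<forall>x y. E x y \<longrightarrow> x \<in> V \<and> y \<in> V)
     \<and> (\<forall>x y. E x y \<longrightarrow> E y x) \<and> (\<forall>x. \<not> E x x)"

text \<open>The subgraph induced on S is connected (S nonempty assumed separately).\<close>

definition connected_in :: "('a \<Rightarrow> 'a \<Rightarrow> bool) \<Rightarrow> 'a set \<Rightarrow> bool" where
  "connected_in E S \<longleftrightarrow>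
     (\<forall>x\<in>S. \<forall>y\<in>S. (\<lambda>u v. E u v \<and> u \<in> S \<and> v \<in> S)\<^sup>*\<^sup>* x y)"

definition is_minor :: "'b set \<Rightarrow> ('b \<Rightarrow> 'b \<Rightarrow> bool) \<Rightarrow> 'a set \<Rightarrow> ('a \<Rightarrow> 'a \<Rightarrow> bool) \<Rightarrow> bool" where
  "is_minor VH EH V E \<longleftrightarrow> (\<exists>B :: 'b \<Rightarrow> 'a set.
     (\<forall>h\<in>VH. B h \<noteq> {} \<and> B h \<subseteq> V \<and> connected_in E (B h))
     \<and> (\<forall>h\<in>VH. \<forall>h'\<in>VH. h \<noteq> h' \<longrightarrow> B h \<inter> B h' = {})
     \<and> (\<forall>h\<in>VH. \<forall>h'\<in>VH. EH h h' \<longrightarrow> (\<exists>x\<in>B h. \<exists>y\<in>B h'. E x y)))"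

definition is_subgraph :: "'b set \<Rightarrow> ('b \<Rightarrow> 'b \<Rightarrow> bool) \<Rightarrow> 'a set \<Rightarrow> ('a \<Rightarrow> 'a \<Rightarrow> bool) \<Rightarrow> bool" where
  "is_subgraph VH EH V E \<longleftrightarrow> (\<exists>f :: 'b \<Rightarrow> 'a.
     inj_on f VH \<and> f ` VH \<subseteq> V \<and> (\<forall>h\<in>VH. \<forall>h'\<in>VH. EH h h' \<longrightarrow> E (f h) (f h')))"

definition K4_V :: "nat set" where "K4_V = {0..<4}"
definition K4_E :: "nat \<Rightarrow> nat \<Rightarrow> bool" where
  "K4_E x y \<longleftrightarrow> x \<in> K4_V \<and> y \<in> K4_V \<and> x \<noteq> y"

definition K23_V :: "nat set" where "K23_V = {0..<5}"
definition K23_E :: "nat \<Rightarrow> nat \<Rightarrow> bool" where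
  "K23_E x y \<longleftrightarrow> x \<in> K23_V \<and> y \<in> K23_V \<and> ((x < 2 \<and> 2 \<le> y) \<or> (y < 2 \<and> 2 \<le> x))"

end

theory Submission
  imports Defs
begin

text \<open>Take a model of \<open>K\<^sup>4\<close> whose branch sets have minimal total size and suppose some
  branch set \<open>B\<^sub>0\<close> has two or more vertices. Split it into a non-separating vertex \<open>x\<close>
  and the connected rest \<open>Y\<close>. By minimality neither \<open>{x}\<close> nor \<open>Y\<close> alone touches all three
  other branch sets, while together they do; so \<open>Y\<close> touches some \<open>B\<^sub>i\<close> missed by \<open>x\<close>, \<open>x\<close>
  touches some \<open>B\<^sub>j\<close> missed by \<open>Y\<close>, and one of them touches the fourth branch set \<open>B\<^sub>k\<close>.
  If it is \<open>Y\<close>, then \<open>Y, B\<^sub>j\<close> against \<open>{x}, B\<^sub>i, B\<^sub>k\<close> are the branch sets of a \<open>K\<^sub>2\<^sub>,\<^sub>3\<close>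
  minor; symmetrically otherwise. Hence all branch sets are singletons, i.e. the minor is a
  subgraph.\<close>

definition adjacent_sets :: "('a \<Rightarrow> 'a \<Rightarrow> bool) \<Rightarrow> 'a set \<Rightarrow> 'a set \<Rightarrow> bool" where
  "adjacent_sets E A C \<longleftrightarrow> (\<exists>x\<in>A. \<exists>y\<in>C. E x y)"

lemma adjacent_sets_commute: "symp E \<Longrightarrow> adjacent_sets E A C \<longleftrightarrow> adjacent_sets E C A"
  unfolding adjacent_sets_def by (auto dest: sympD)

lemma adjacent_sets_Un_left:
  "adjacent_sets E (A \<union> C) D \<longleftrightarrow> adjacent_sets E A D \<or> adjacent_sets E C D"
  unfolding adjacent_sets_def by blast

definition minor_model ::
    "'b set \<Rightarrow> ('b \<Rightarrow> 'b \<Rightarrow> bool) \<Rightarrow> 'a set \<Rightarrow> ('a \<Rightarrow> 'a \<Rightarrow> bool) \<Rightarrow> ('b \<Rightarrow> 'a set) \<Rightarrow> bool" where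
  "minor_model VH EH V E B \<longleftrightarrow>
     (\<forall>h\<in>VH. B h \<noteq> {} \<and> B h \<subseteq> V \<and> connected_in E (B h))
     \<and> (\<forall>h\<in>VH. \<forall>h'\<in>VH. h \<noteq> h' \<longrightarrow> B h \<inter> B h' = {})
     \<and> (\<forall>h\<in>VH. \<forall>h'\<in>VH. EH h h' \<longrightarrow> adjacent_sets E (B h) (B h'))"

lemma is_minor_iff_minor_model: "is_minor VH EH V E \<longleftrightarrow> (\<exists>B. minor_model VH EH V E B)"
  unfolding is_minor_def minor_model_def adjacent_sets_def ..

lemma minor_modelD:
  assumes "minor_model VH EH V E B"
  shows "h \<in> VH \<Longrightarrow> B h \<noteq> {}" "h \<in> VH \<Longrightarrow> B h \<subseteq> V" "h \<in> VH \<Longrightarrow> connected_in E (B h)"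
    "h \<in> VH \<Longrightarrow> h' \<in> VH \<Longrightarrow> h \<noteq> h' \<Longrightarrow> B h \<inter> B h' = {}"
    "h \<in> VH \<Longrightarrow> h' \<in> VH \<Longrightarrow> EH h h' \<Longrightarrow> adjacent_sets E (B h) (B h')"
  using assms unfolding minor_model_def by blast+

lemma connected_in_singleton: "connected_in E {x}"
  unfolding connected_in_def by auto

lemma connected_in_insert:
  assumes "symp E" and S: "connected_in E S" and "u \<in> S" and "E u v"
  shows "connected_in E (insert v S)"
  unfolding connected_in_def
proof (intro ballI)
  let ?R = "\<lambda>x y. E x y \<and> x \<in> insert v S \<and> y \<in> insert v S"
  have in_S: "?R\<^sup>*\<^sup>* x y" if "x \<in> S" "y \<in> S" for x y
    using S that mono_rtranclp[of "\<lambda>x y. E x y \<and> x \<in> S \<and> y \<in> S" ?R]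
    unfolding connected_in_def by blast
  have "?R u v" "?R v u" using assms by (auto dest: sympD)
  then have "?R\<^sup>*\<^sup>* x v" "?R\<^sup>*\<^sup>* v x" if "x \<in> S" for x
    using in_S[OF that \<open>u \<in> S\<close>] in_S[OF \<open>u \<in> S\<close> that]
    by (auto intro: rtranclp.rtrancl_into_rtrancl converse_rtranclp_into_rtranclp)
  with in_S show "?R\<^sup>*\<^sup>* x y" if "x \<in> insert v S" "y \<in> insert v S" for x y
    using that by auto
qed

lemma rtranclp_leaving_set:
  assumes "r\<^sup>*\<^sup>* x z" "x \<in> A" "z \<notin> A"
  obtains u v where "r u v" "u \<in> A" "v \<notin> A"
  using assms by (induction rule: rtranclp_induct) auto

text \<open>A connected proper subset of maximal size can absorb any outside neighbour, so it
  misses exactly one vertex.\<close>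

lemma connected_in_non_separating_vertex:
  assumes "symp E" "finite S" "connected_in E S" "2 \<le> card S"
  obtains x where "x \<in> S" "connected_in E (S - {x})" "adjacent_sets E (S - {x}) {x}"
proof -
  define P where "P Y \<longleftrightarrow> Y \<subset> S \<and> Y \<noteq> {} \<and> connected_in E Y" for Y
  obtain s where "s \<in> S" using assms(4) by fastforce
  moreover have "{s} \<noteq> S" using assms(4) by auto
  ultimately have "P {s}" unfolding P_def by (auto simp: connected_in_singleton)
  moreover have "\<forall>Y. P Y \<longrightarrow> card Y < card S"
    unfolding P_def using assms(2) by (auto intro: psubset_card_mono)
  ultimately obtain Y where "P Y" and Y_max: "\<forall>Z. P Z \<longrightarrow> card Z \<le> card Y"
    using ex_has_greatest_nat[of P "{s}" card "card S"] by blast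
  then have "Y \<subset> S" "Y \<noteq> {}" and Y: "connected_in E Y" unfolding P_def by auto
  then obtain y z where "y \<in> Y" "z \<in> S - Y" by blast
  then have "(\<lambda>u v. E u v \<and> u \<in> S \<and> v \<in> S)\<^sup>*\<^sup>* y z"
    using assms(3) \<open>Y \<subset> S\<close> unfolding connected_in_def by blast
  then obtain u v where uv: "E u v" "u \<in> Y" "v \<in> S - Y"
    using \<open>y \<in> Y\<close> \<open>z \<in> S - Y\<close> by (blast elim: rtranclp_leaving_set)
  have "card Y < card (insert v Y)"
    using uv(3) finite_subset[OF psubset_imp_subset[OF \<open>Y \<subset> S\<close>] assms(2)] by simp
  then have "\<not> P (insert v Y)" using Y_max by (meson not_le)
  moreover have "insert v Y \<subseteq> S" using uv \<open>Y \<subset> S\<close> by auto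
  moreover have "connected_in E (insert v Y)" using connected_in_insert[OF assms(1) Y uv(2,1)] .
  ultimately have "insert v Y = S" unfolding P_def by blast
  then have "Y = S - {v}" using uv by auto
  then show thesis using that[of v] Y uv unfolding adjacent_sets_def by blast
qed

lemma minor_model_shrink_branch_set:
  assumes B: "minor_model VH EH V E B" and "symp E" "h0 \<in> VH" "Z \<subseteq> B h0" "Z \<noteq> {}"
    "connected_in E Z" "\<not> EH h0 h0"
    and Z_adj: "\<And>h. h \<in> VH \<Longrightarrow> EH h0 h \<or> EH h h0 \<Longrightarrow> adjacent_sets E Z (B h)"
  shows "minor_model VH EH V E (B(h0 := Z))"
  unfolding minor_model_def
proof (intro conjI ballI impI)
  fix h assume "h \<in> VH"
  have "Z \<subseteq> V" using \<open>Z \<subseteq> B h0\<close> minor_modelD(2)[OF B \<open>h0 \<in> VH\<close>] by blast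
  with \<open>h \<in> VH\<close> show "(B(h0 := Z)) h \<noteq> {}" "(B(h0 := Z)) h \<subseteq> V" "connected_in E ((B(h0 := Z)) h)"
    using assms minor_modelD[OF B] by auto
next
  fix h h' assume "h \<in> VH" "h' \<in> VH" "h \<noteq> h'"
  have "(B(h0 := Z)) g \<subseteq> B g" for g using \<open>Z \<subseteq> B h0\<close> by simp
  then show "(B(h0 := Z)) h \<inter> (B(h0 := Z)) h' = {}"
    using minor_modelD(4)[OF B \<open>h \<in> VH\<close> \<open>h' \<in> VH\<close> \<open>h \<noteq> h'\<close>] by blast
next
  fix h h' assume "h \<in> VH" "h' \<in> VH" "EH h h'"
  show "adjacent_sets E ((B(h0 := Z)) h) ((B(h0 := Z)) h')"
  proof (cases "h = h0")
    case True
    then have "h' \<noteq> h0" using \<open>EH h h'\<close> \<open>\<not> EH h0 h0\<close> by blast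
    with True show ?thesis using Z_adj[OF \<open>h' \<in> VH\<close>] \<open>EH h h'\<close> by simp
  next
    case h_ne: False
    show ?thesis
    proof (cases "h' = h0")
      case True
      then show ?thesis
        using h_ne Z_adj[OF \<open>h \<in> VH\<close>] \<open>EH h h'\<close> adjacent_sets_commute[OF \<open>symp E\<close>] by simp
    next
      case False
      then show ?thesis
        using h_ne minor_modelD(5)[OF B \<open>h \<in> VH\<close> \<open>h' \<in> VH\<close> \<open>EH h h'\<close>] by simp
    qed
  qed
qed

definition minimal_minor_model ::
    "'b set \<Rightarrow> ('b \<Rightarrow> 'b \<Rightarrow> bool) \<Rightarrow> 'a set \<Rightarrow> ('a \<Rightarrow> 'a \<Rightarrow> bool) \<Rightarrow> ('b \<Rightarrow> 'a set) \<Rightarrow> bool" where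
  "minimal_minor_model VH EH V E B \<longleftrightarrow> minor_model VH EH V E B \<and>
     (\<forall>B'. minor_model VH EH V E B' \<longrightarrow> (\<Sum>h\<in>VH. card (B h)) \<le> (\<Sum>h\<in>VH. card (B' h)))"

lemma minimal_minor_model_exists:
  assumes "is_minor VH EH V E"
  shows "\<exists>B. minimal_minor_model VH EH V E B"
  using assms ex_has_least_nat[of "minor_model VH EH V E" _ "\<lambda>B. \<Sum>h\<in>VH. card (B h)"]
  unfolding is_minor_iff_minor_model minimal_minor_model_def by metis

lemma minimal_minor_model_no_shrinking:
  assumes "minimal_minor_model VH EH V E B"
    and "finite V" "finite VH" "symp E" "h0 \<in> VH" "\<not> EH h0 h0"
    and "Z \<subset> B h0" "Z \<noteq> {}" "connected_in E Z"
  shows "\<exists>h\<in>VH. (EH h0 h \<or> EH h h0) \<and> \<not> adjacent_sets E Z (B h)"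
proof (rule ccontr)
  assume "\<not> ?thesis"
  have B: "minor_model VH EH V E B"
    and B_min: "\<And>B'. minor_model VH EH V E B' \<Longrightarrow> (\<Sum>h\<in>VH. card (B h)) \<le> (\<Sum>h\<in>VH. card (B' h))"
    using assms(1) unfolding minimal_minor_model_def by auto
  with \<open>\<not> ?thesis\<close> have "minor_model VH EH V E (B(h0 := Z))"
    using minor_model_shrink_branch_set[OF B] assms by blast
  moreover have "finite (B h0)"
    using minor_modelD(2)[OF B \<open>h0 \<in> VH\<close>] \<open>finite V\<close> by (rule finite_subset)
  then have "(\<Sum>h\<in>VH. card ((B(h0 := Z)) h)) < (\<Sum>h\<in>VH. card (B h))"
    using \<open>finite VH\<close> \<open>h0 \<in> VH\<close> \<open>Z \<subset> B h0\<close>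
    by (intro sum_strict_mono_ex1) (auto intro: card_mono psubset_card_mono)
  ultimately show False using B_min by fastforce
qed

lemma subgraph_of_singleton_minor_model:
  assumes B: "minor_model VH EH V E B" and card_B: "\<And>h. h \<in> VH \<Longrightarrow> card (B h) = 1"
  shows "is_subgraph VH EH V E"
proof -
  define f where "f h = the_elem (B h)" for h
  have B_eq: "B h = {f h}" if h: "h \<in> VH" for h
  proof -
    obtain x where "B h = {x}" using card_B[OF h] by (rule card_1_singletonE)
    then show ?thesis unfolding f_def by simp
  qed
  have "inj_on f VH"
  proof (rule inj_onI)
    fix h h' assume "h \<in> VH" "h' \<in> VH" "f h = f h'"
    then have "B h \<inter> B h' \<noteq> {}" using B_eq by simp
    then show "h = h'" using minor_modelD(4)[OF B \<open>h \<in> VH\<close> \<open>h' \<in> VH\<close>] by blast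
  qed
  moreover have "f ` VH \<subseteq> V"
    using minor_modelD(2)[OF B] B_eq by blast
  moreover have "E (f h) (f h')" if "h \<in> VH" "h' \<in> VH" "EH h h'" for h h'
    using minor_modelD(5)[OF B that] B_eq[OF that(1)] B_eq[OF that(2)]
    unfolding adjacent_sets_def by simp
  ultimately show ?thesis unfolding is_subgraph_def by blast
qed

lemma minor_if_subgraph:
  assumes "is_subgraph VH EH V E"
  shows "is_minor VH EH V E"
proof -
  obtain f where f: "inj_on f VH" "f ` VH \<subseteq> V" "\<forall>h\<in>VH. \<forall>h'\<in>VH. EH h h' \<longrightarrow> E (f h) (f h')"
    using assms unfolding is_subgraph_def by blast
  then have "minor_model VH EH V E (\<lambda>h. {f h})"
    unfolding minor_model_def adjacent_sets_def
    by (auto simp: connected_in_singleton dest: inj_onD)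
  then show ?thesis unfolding is_minor_iff_minor_model by blast
qed

lemma K23_minor_from_split_branch_set:
  assumes B: "minor_model K4_V K4_E V E B" and "symp E"
    and idx: "{h0, i, j, k} \<subseteq> K4_V" "distinct [h0, i, j, k]"
    and PQ: "P \<union> Q \<subseteq> B h0" "P \<inter> Q = {}" "P \<noteq> {}" "Q \<noteq> {}"
      "connected_in E P" "connected_in E Q"
    and adj: "adjacent_sets E Q P" "adjacent_sets E Q (B i)" "adjacent_sets E Q (B k)"
      "adjacent_sets E (B j) P"
  shows "is_minor K23_V K23_E V E"
proof -
  have mem: "h0 \<in> K4_V" "i \<in> K4_V" "j \<in> K4_V" "k \<in> K4_V" using idx(1) by auto
  have adj_B: "adjacent_sets E (B h) (B h')" if "h \<in> K4_V" "h' \<in> K4_V" "h \<noteq> h'" for h h'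
    using minor_modelD(5)[OF B that(1,2)] that unfolding K4_E_def by blast
  have adj_rev: "adjacent_sets E P Q" "adjacent_sets E (B i) Q" "adjacent_sets E (B k) Q"
      "adjacent_sets E P (B j)"
    using adj adjacent_sets_commute[OF \<open>symp E\<close>] by auto
  note disj = minor_modelD(4)[OF B]
  have "B h0 \<inter> B i = {}" "B h0 \<inter> B j = {}" "B h0 \<inter> B k = {}"
    using disj mem idx(2) by auto
  then have disj_PQ: "P \<inter> B i = {}" "P \<inter> B j = {}" "P \<inter> B k = {}"
      "Q \<inter> B i = {}" "Q \<inter> B j = {}" "Q \<inter> B k = {}"
    using PQ(1) by blast+
  have disj_B: "B i \<inter> B j = {}" "B i \<inter> B k = {}" "B j \<inter> B k = {}"
    using disj mem idx(2) by auto
  have "P \<subseteq> V" "Q \<subseteq> V" using PQ(1) minor_modelD(2)[OF B mem(1)] by auto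
  have K23_V_eq: "K23_V = {0, 1, 2, 3, 4}" by (auto simp: K23_V_def)
  define C where "C = (\<lambda>n. [Q, B j, P, B i, B k] ! n)"
  \<comment> \<open>the two sides of \<open>K\<^sub>2\<^sub>,\<^sub>3\<close> are \<open>Q, B j\<close> and \<open>P, B i, B k\<close>\<close>
  have "minor_model K23_V K23_E V E C"
    unfolding minor_model_def K23_V_eq K23_E_def
    using PQ adj adj_rev disj_PQ disj_B \<open>P \<subseteq> V\<close> \<open>Q \<subseteq> V\<close> minor_modelD(1-3)[OF B]
      mem adj_B[OF mem(3,2)] adj_B[OF mem(3,4)] adj_B[OF mem(2,3)] adj_B[OF mem(4,3)] idx(2)
    by (simp add: C_def Int_commute)
  then show ?thesis unfolding is_minor_iff_minor_model by blast
qed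

lemma K4_V_not_covered_by_three: "\<exists>k\<in>K4_V. k \<notin> {a, b, c}"
proof -
  have "card {a, b, c} < card K4_V" by (simp add: K4_V_def card_insert_if)
  then show ?thesis by (meson card_mono finite.emptyI finite.insertI not_le subsetI)
qed

lemma K23_minor_if_branch_set_splits:
  assumes B: "minor_model K4_V K4_E V E B" and "symp E" and "h0 \<in> K4_V"
    and parts: "X \<union> Y = B h0" "X \<inter> Y = {}" "X \<noteq> {}" "Y \<noteq> {}"
      "connected_in E X" "connected_in E Y" "adjacent_sets E X Y"
    and i: "i \<in> K4_V" "i \<noteq> h0" "\<not> adjacent_sets E X (B i)"
    and j: "j \<in> K4_V" "j \<noteq> h0" "\<not> adjacent_sets E Y (B j)"
  shows "is_minor K23_V K23_E V E"
proof -
  note commute = adjacent_sets_commute[OF \<open>symp E\<close>]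
  have touches: "adjacent_sets E X (B h) \<or> adjacent_sets E Y (B h)" if "h \<in> K4_V" "h \<noteq> h0" for h
  proof -
    have "K4_E h0 h" using that \<open>h0 \<in> K4_V\<close> unfolding K4_E_def by auto
    then have "adjacent_sets E (X \<union> Y) (B h)"
      using minor_modelD(5)[OF B \<open>h0 \<in> K4_V\<close> that(1)] parts(1) by simp
    then show ?thesis by (simp only: adjacent_sets_Un_left)
  qed
  then have "adjacent_sets E Y (B i)" "adjacent_sets E X (B j)"
    using i j by blast+
  moreover have "adjacent_sets E Y X" "adjacent_sets E (B i) Y" "adjacent_sets E (B j) X"
    using parts(7) calculation commute by blast+
  moreover obtain k where "k \<in> K4_V" "k \<notin> {h0, i, j}" using K4_V_not_covered_by_three by blast
  moreover have "i \<noteq> j" using \<open>adjacent_sets E Y (B i)\<close> j(3) by auto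
  ultimately have idx: "{h0, i, j, k} \<subseteq> K4_V" "distinct [h0, i, j, k]"
      "{h0, j, i, k} \<subseteq> K4_V" "distinct [h0, j, i, k]"
    using i j \<open>h0 \<in> K4_V\<close> by auto
  have "k \<noteq> h0" using \<open>k \<notin> {h0, i, j}\<close> by simp
  from touches[OF \<open>k \<in> K4_V\<close> this] show ?thesis
  proof
    assume "adjacent_sets E X (B k)"
    with parts \<open>adjacent_sets E X (B j)\<close> \<open>adjacent_sets E (B i) Y\<close> show ?thesis
      by (intro K23_minor_from_split_branch_set[OF B \<open>symp E\<close> idx(3,4), of Y X]) auto
  next
    assume "adjacent_sets E Y (B k)"
    with parts \<open>adjacent_sets E Y X\<close> \<open>adjacent_sets E Y (B i)\<close> \<open>adjacent_sets E (B j) X\<close>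
    show ?thesis
      by (intro K23_minor_from_split_branch_set[OF B \<open>symp E\<close> idx(1,2), of X Y]) auto
  qed
qed

lemma K4_minimal_minor_model_singleton:
  assumes G: "simple_graph V E" and no_K23: "\<not> is_minor K23_V K23_E V E"
    and B_min: "minimal_minor_model K4_V K4_E V E B" and "h0 \<in> K4_V"
  shows "card (B h0) = 1"
proof (rule ccontr)
  assume "card (B h0) \<noteq> 1"
  have "symp E" "finite V" using G unfolding simple_graph_def symp_def by auto
  have B: "minor_model K4_V K4_E V E B" using B_min unfolding minimal_minor_model_def by blast
  have "finite (B h0)" using minor_modelD(2)[OF B \<open>h0 \<in> K4_V\<close>] \<open>finite V\<close> by (rule finite_subset)
  then have "2 \<le> card (B h0)"
    using minor_modelD(1)[OF B \<open>h0 \<in> K4_V\<close>] \<open>card (B h0) \<noteq> 1\<close> by (cases "card (B h0)") auto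
  then obtain x where "x \<in> B h0" and Y: "connected_in E (B h0 - {x})"
    and x_adj: "adjacent_sets E (B h0 - {x}) {x}"
    using connected_in_non_separating_vertex[OF \<open>symp E\<close> \<open>finite (B h0)\<close>
        minor_modelD(3)[OF B \<open>h0 \<in> K4_V\<close>]]
    by blast
  have "B h0 \<noteq> {x}" using \<open>2 \<le> card (B h0)\<close> by auto
  then have parts: "{x} \<union> (B h0 - {x}) = B h0" "B h0 - {x} \<noteq> {}"
    "{x} \<subset> B h0" "B h0 - {x} \<subset> B h0"
    using \<open>x \<in> B h0\<close> by auto
  have "finite K4_V" "\<not> K4_E h0 h0" by (simp_all add: K4_V_def K4_E_def)
  have misses: "\<exists>h\<in>K4_V. h \<noteq> h0 \<and> \<not> adjacent_sets E Z (B h)"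
    if "Z \<subset> B h0" "Z \<noteq> {}" "connected_in E Z" for Z
    using minimal_minor_model_no_shrinking[OF B_min \<open>finite V\<close> \<open>finite K4_V\<close> \<open>symp E\<close>
        \<open>h0 \<in> K4_V\<close> \<open>\<not> K4_E h0 h0\<close> that]
    by (auto simp: K4_E_def)
  obtain i where "i \<in> K4_V" "i \<noteq> h0" "\<not> adjacent_sets E {x} (B i)"
    using misses[OF parts(3) _ connected_in_singleton] by blast
  moreover obtain j where "j \<in> K4_V" "j \<noteq> h0" "\<not> adjacent_sets E (B h0 - {x}) (B j)"
    using misses[OF parts(4,2) Y] by blast
  moreover have "adjacent_sets E {x} (B h0 - {x})"
    using x_adj adjacent_sets_commute[OF \<open>symp E\<close>] by blast
  ultimately have "is_minor K23_V K23_E V E"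
    using parts Y
    by (intro K23_minor_if_branch_set_splits[OF B \<open>symp E\<close> \<open>h0 \<in> K4_V\<close>, of "{x}" "B h0 - {x}"])
      (auto simp: connected_in_singleton)
  with no_K23 show False ..
qed

theorem lemma4p1:
  fixes V :: "'a set" and E :: "'a \<Rightarrow> 'a \<Rightarrow> bool"
  assumes "simple_graph V E"
    and "\<not> is_minor K23_V K23_E V E"
  shows "is_minor K4_V K4_E V E \<longleftrightarrow> is_subgraph K4_V K4_E V E"
proof
  assume "is_minor K4_V K4_E V E"
  then obtain B where B: "minimal_minor_model K4_V K4_E V E B"
    using minimal_minor_model_exists by blast
  have "card (B h) = 1" if "h \<in> K4_V" for h
    using K4_minimal_minor_model_singleton[OF assms B that] .
  moreover have "minor_model K4_V K4_E V E B" using B unfolding minimal_minor_model_def by blast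
  ultimately show "is_subgraph K4_V K4_E V E" using subgraph_of_singleton_minor_model by blast
next
  assume "is_subgraph K4_V K4_E V E"
  then show "is_minor K4_V K4_E V E" by (rule minor_if_subgraph)
qed

end
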